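(* Assume the setting of the context. Then: (1) $y$ admits a constant arithmetic subsequence (there exist $p\ge1$, $k\in\mathbb Z$, $b\in\mathcal B$ with $y_{k+np}=b$ for all $n\in\mathbb Z$) if and only if some vertex $\mathcal C$ of $G(\sigma)$ satisfies that $\phi(\mathcal C)$ is a singleton; (2) $y$ is periodic if and only if there exists $N$ such that every walk of length at least $N$ in $G(\sigma)$ ends at a vertex $\mathcal C$ with $\phi(\mathcal C)$ a singleton.
   Context: Let $\sigma:\mathcal A^*\to\mathcal A^*$ be a primitive substitution of constant length $l\ge2$, $x\in\mathcal A^{\mathbb Z}$ an admissible two-sided fixed point of $\sigma$ (so $x_{lj+i}=\sigma(x_j)_i$, $w_i$ being the $i$-th letter of $w$ indexed from $0$), $\phi:\mathcal A\to\mathcal B$ a coding, $y=\phi(x)$; the subshift generated by $x$ is assumed non-periodic. Height $h=\max\{n\ge1 : \gcd(n,l)=1,\ n\mid g_0\}$, $g_0=\gcd\{n\ge1:x_n=x_0\}$. For $0\le i<h$, $\mathcal A_i=\{x_{i+nh}:n\in\mathbb Z\}$. Graph $G(\sigma)$: vertices are subsets of $\mathcal A$; for a subset $\mathcal C$ and $0\le i<l$ there is an edge labelled $i$ from $\mathcal C$ to $\{\sigma(b)_i : b\in\mathcal C\}$; $G(\sigma)$ is restricted to vertices reachable from $\mathcal A_0,\dots,\mathcal A_{h-1}$. $\phi(\mathcal C)=\{\phi(c):c\in\mathcal C\}$. *)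

theory Defs
  imports Main
begin

text \<open>Substitutions are maps \<open>\<sigma> :: 'a \<Rightarrow> 'a list\<close> on a finite alphabet (the type \<open>'a\<close>);
  letters of a word are indexed from 0 via \<open>!\<close>.\<close>

definition subst_word :: "('a \<Rightarrow> 'a list) \<Rightarrow> 'a list \<Rightarrow> 'a list" where
  "subst_word \<sigma> w = concat (map \<sigma> w)"

definition subst_iter :: "('a \<Rightarrow> 'a list) \<Rightarrow> nat \<Rightarrow> 'a \<Rightarrow> 'a list" where
  "subst_iter \<sigma> k a = (subst_word \<sigma> ^^ k) [a]"

definition constant_length :: "('a \<Rightarrow> 'a list) \<Rightarrow> nat \<Rightarrow> bool" where
  "constant_length \<sigma> l \<longleftrightarrow> (\<forall>a. length (\<sigma> a) = l)"

definition primitive :: "('a \<Rightarrow> 'a list) \<Rightarrow> bool" where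
  "primitive \<sigma> \<longleftrightarrow> (\<exists>k\<ge>1. \<forall>a b. b \<in> set (subst_iter \<sigma> k a))"

definition subst_language :: "('a \<Rightarrow> 'a list) \<Rightarrow> 'a list set" where
  "subst_language \<sigma> = {w. \<exists>k a u v. subst_iter \<sigma> k a = u @ w @ v}"

definition window :: "(int \<Rightarrow> 'a) \<Rightarrow> int \<Rightarrow> nat \<Rightarrow> 'a list" where
  "window z m n = map (\<lambda>i. z (m + int i)) [0..<n]"

definition is_fixed_point :: "('a \<Rightarrow> 'a list) \<Rightarrow> nat \<Rightarrow> (int \<Rightarrow> 'a) \<Rightarrow> bool" where
  "is_fixed_point \<sigma> l x \<longleftrightarrow> (\<forall>j::int. \<forall>i<l. x (int l * j + int i) = \<sigma> (x j) ! i)"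

definition admissible :: "('a \<Rightarrow> 'a list) \<Rightarrow> (int \<Rightarrow> 'a) \<Rightarrow> bool" where
  "admissible \<sigma> x \<longleftrightarrow> (\<forall>m n. window x m n \<in> subst_language \<sigma>)"

definition subshift_gen :: "(int \<Rightarrow> 'a) \<Rightarrow> (int \<Rightarrow> 'a) set" where
  "subshift_gen x = {z. \<forall>m n. \<exists>m'. window z m n = window x m' n}"

definition periodic_seq :: "(int \<Rightarrow> 'b) \<Rightarrow> bool" where
  "periodic_seq y \<longleftrightarrow> (\<exists>p::int\<ge>1. \<forall>n. y (n + p) = y n)"

text \<open>A subshift is periodic iff it is finite (i.e. a finite union of orbits of periodic points).\<close>
definition nonperiodic_subshift :: "(int \<Rightarrow> 'a) set \<Rightarrow> bool" where
  "nonperiodic_subshift X \<longleftrightarrow> infinite X"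

definition g0 :: "(int \<Rightarrow> 'a) \<Rightarrow> nat" where
  "g0 x = Gcd {n::nat. n \<ge> 1 \<and> x (int n) = x 0}"

definition height :: "nat \<Rightarrow> (int \<Rightarrow> 'a) \<Rightarrow> nat" where
  "height l x = Max {n::nat. n \<ge> 1 \<and> coprime n l \<and> n dvd g0 x}"

definition height_class :: "nat \<Rightarrow> (int \<Rightarrow> 'a) \<Rightarrow> nat \<Rightarrow> 'a set" where
  "height_class h x i = {x (int i + n * int h) | n. True}"

definition graph_step :: "('a \<Rightarrow> 'a list) \<Rightarrow> nat \<Rightarrow> 'a set \<Rightarrow> 'a set" where
  "graph_step \<sigma> i C = {\<sigma> b ! i | b. b \<in> C}"

inductive_set graph_vertices :: "('a \<Rightarrow> 'a list) \<Rightarrow> nat \<Rightarrow> (int \<Rightarrow> 'a) \<Rightarrow> 'a set set"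
  for \<sigma> l x where
  base: "i < height l x \<Longrightarrow> height_class (height l x) x i \<in> graph_vertices \<sigma> l x"
| step: "C \<in> graph_vertices \<sigma> l x \<Longrightarrow> i < l \<Longrightarrow> graph_step \<sigma> i C \<in> graph_vertices \<sigma> l x"

text \<open>End vertex of the walk starting at \<open>C\<close> following the edge labels \<open>is\<close>
  (its length is \<open>length is\<close>).\<close>
definition walk_end :: "('a \<Rightarrow> 'a list) \<Rightarrow> 'a set \<Rightarrow> nat list \<Rightarrow> 'a set" where
  "walk_end \<sigma> C is = foldl (\<lambda>D i. graph_step \<sigma> i D) C is"

end

theory Submission
  imports Defs "HOL-Number_Theory.Number_Theory"
begin

text \<open>The vertices of \<open>G(\<sigma>)\<close> are exactly the sets of letters that \<open>x\<close> takes on the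
  progressions \<open>r + l^K h \<int>\<close>: by the fixed-point equation, the edge labelled \<open>i\<close> sends the
  progression of level \<open>K\<close> through \<open>r\<close> to the one of level \<open>K + 1\<close> through \<open>l r + i\<close>.
  The heart of the matter is that for every \<open>p \<ge> 1\<close> and all large \<open>K\<close>, each letter on such a
  progression already occurs on \<open>r + p \<int>\<close>. Writing \<open>p | l^K q\<close> with \<open>q\<close> coprime to \<open>l\<close>
  reduces this to \<open>q\<close>. The residues mod \<open>q\<close> of the return times of \<open>x\<close> to \<open>x\<^sub>0\<close> are closed
  under addition (as \<open>l^K \<equiv> 1 (mod q)\<close> for suitable \<open>K\<close>), hence form a subgroup \<open>d\<int>/q\<int>\<close>;
  \<open>d\<close> divides \<open>g\<^sub>0\<close> and is coprime to \<open>l\<close>, so it divides the height \<open>h\<close>, and every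
  multiple of \<open>h\<close> is a return residue. Then \<open>\<phi>\<close> is constant on a vertex iff \<open>y\<close> is constant
  along a progression, and constant on all vertices of large level iff \<open>y\<close> is periodic.\<close>

lemma length_concat_map_const:
  "(\<And>b. length (f b) = l) \<Longrightarrow> length (concat (map f ws)) = l * length ws"
  by (induction ws) auto

lemma nth_concat_map_const:
  assumes "\<And>b. length (f b) = l" "j < length ws" "i < l"
  shows "concat (map f ws) ! (j * l + i) = f (ws ! j) ! i"
  using assms(2)
proof (induction ws arbitrary: j)
  case Nil
  then show ?case by simp
next
  case (Cons a ws)
  then show ?case
    using assms(1,3) by (cases j) (auto simp: nth_append algebra_simps)
qed

lemma subst_iter_Suc: "subst_iter \<sigma> (Suc K) a = concat (map \<sigma> (subst_iter \<sigma> K a))"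
  by (simp add: subst_iter_def subst_word_def)

lemma length_subst_iter: "constant_length \<sigma> l \<Longrightarrow> length (subst_iter \<sigma> K a) = l ^ K"
  by (induction K)
    (simp_all add: subst_iter_Suc length_concat_map_const constant_length_def,
      simp add: subst_iter_def)

lemma ex_coprime_cofactor_dvd_power:
  fixes p l :: nat
  assumes "p \<ge> 1"
  shows "\<exists>q K. q \<ge> 1 \<and> coprime q l \<and> p dvd l ^ K * q"
  using assms
proof (induction p rule: less_induct)
  case (less p)
  show ?case
  proof (cases "coprime p l")
    case True
    then show ?thesis using less.prems by (intro exI[of _ p] exI[of _ 0]) auto
  next
    case False
    define g where "g = gcd p l"
    have "g \<noteq> 1" using False coprime_iff_gcd_eq_1[of p l] g_def by metis
    moreover have "g > 0" using less.prems by (simp add: g_def)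
    ultimately have "g > 1" by simp
    obtain p' where p: "p = g * p'" using gcd_dvd1[of p l, unfolded dvd_def] g_def by blast
    have "p' < p" "p' \<ge> 1" using p \<open>g > 1\<close> less.prems by (auto simp: Suc_le_eq)
    then obtain q K where qK: "q \<ge> 1" "coprime q l" "p' dvd l ^ K * q" using less.IH by blast
    have "g * p' dvd l * (l ^ K * q)" using qK(3) by (intro mult_dvd_mono) (simp_all add: g_def)
    then have "p dvd l ^ Suc K * q" by (simp add: p mult.assoc)
    then show ?thesis using qK by blast
  qed
qed

lemma ex_power_cong_one_gt:
  fixes l q s :: nat
  assumes "l \<ge> 2" "q \<ge> 1" "coprime q l"
  shows "\<exists>K. [int l ^ K = 1] (mod int q) \<and> s < l ^ K"
proof -
  define K where "K = totient q * s"
  have "[l ^ totient q = 1] (mod q)"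
    using euler_theorem[of l q] assms by (simp add: coprime_commute)
  then have "[(l ^ totient q) ^ s = 1] (mod q)" using cong_pow by fastforce
  then have "[int ((l ^ totient q) ^ s) = int 1] (mod int q)"
    by (simp only: cong_int_iff)
  then have "[int l ^ K = 1] (mod int q)"
    by (simp only: K_def power_mult of_nat_power of_nat_1)
  moreover have "s < l ^ K"
  proof -
    have "s \<le> K" using assms(2) by (simp add: K_def Suc_le_eq)
    then have "l ^ s \<le> l ^ K" using power_increasing[of s K l] assms(1) by simp
    moreover have "(2::nat) ^ s \<le> l ^ s" using power_mono[of 2 l s] assms(1) by simp
    ultimately show ?thesis using less_exp[of s] by linarith
  qed
  ultimately show ?thesis by blast
qed

lemma periodic_add_mult:
  fixes y :: "int \<Rightarrow> 'b"
  assumes "\<And>n. y (n + p) = y n"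
  shows "y (r + c * p) = y r"
proof (induction c rule: int_induct[where k = 0])
  case (step1 c)
  have "y (r + (c + 1) * p) = y ((r + c * p) + p)" by (simp add: algebra_simps)
  also have "\<dots> = y r" using assms step1 by simp
  finally show ?case .
next
  case (step2 c)
  have "y (r + (c - 1) * p) = y ((r + (c - 1) * p) + p)" using assms by simp
  also have "\<dots> = y r" using step2 by (simp add: algebra_simps)
  finally show ?case .
qed simp

lemma add_closed_mod_closed_eq_multiples:
  fixes Z :: "int set" and q :: nat
  assumes "q \<ge> 1" "0 \<in> Z"
    and add: "\<And>a b. a \<in> Z \<Longrightarrow> b \<in> Z \<Longrightarrow> a + b \<in> Z"
    and cong: "\<And>a b. a \<in> Z \<Longrightarrow> [a = b] (mod int q) \<Longrightarrow> b \<in> Z"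
  obtains d :: nat where "d \<ge> 1" "d dvd q" "Z = {a. int d dvd a}"
proof -
  have nat_mult: "int n * a \<in> Z" if "a \<in> Z" for n a
    by (induction n) (auto simp: assms(2) algebra_simps intro: add that)
  have mult: "c * a \<in> Z" if "a \<in> Z" for c a
  proof -
    have "[int (nat (c mod int q)) * a = c * a] (mod int q)"
      using assms(1) by (intro cong_mult) (auto simp: cong_def)
    then show ?thesis using cong nat_mult that by blast
  qed
  have "int q \<in> Z" using cong[OF assms(2)] by (simp add: cong_def)
  define d where "d = (LEAST n::nat. n > 0 \<and> int n \<in> Z)"
  have d: "d > 0" "int d \<in> Z"
    using LeastI[of "\<lambda>n. n > 0 \<and> int n \<in> Z" q] \<open>int q \<in> Z\<close> assms(1) by (auto simp: d_def)
  have d_dvd: "int d dvd a" if "a \<in> Z" for a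
  proof -
    have "a + (- (a div int d)) * int d \<in> Z" using that d by (intro add mult)
    moreover have "a + (- (a div int d)) * int d = a mod int d"
      using minus_div_mult_eq_mod[of a "int d"] by simp
    moreover have "a mod int d \<ge> 0" using d by simp
    ultimately have "int (nat (a mod int d)) \<in> Z" by simp
    moreover have "a mod int d < int d" using d by simp
    ultimately have "\<not> nat (a mod int d) > 0"
      using not_less_Least[of "nat (a mod int d)" "\<lambda>n. n > 0 \<and> int n \<in> Z"] by (auto simp: d_def)
    then have "a mod int d = 0" using \<open>a mod int d \<ge> 0\<close> by linarith
    then show ?thesis by (simp add: dvd_eq_mod_eq_0)
  qed
  have "d dvd q" using d_dvd[OF \<open>int q \<in> Z\<close>] by simp
  moreover have "Z = {a. int d dvd a}"
  proof
    show "Z \<subseteq> {a. int d dvd a}" using d_dvd by blast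
    show "{a. int d dvd a} \<subseteq> Z" using mult[OF d(2)] by (auto elim!: dvdE simp: mult.commute)
  qed
  ultimately show ?thesis using that d(1) by (simp add: Suc_le_eq)
qed

locale primitive_fixed_point =
  fixes \<sigma> :: "'a \<Rightarrow> 'a list" and l :: nat and x :: "int \<Rightarrow> 'a"
  assumes primitive: "primitive \<sigma>" and constant_length: "constant_length \<sigma> l"
    and l_ge_2: "l \<ge> 2" and fixed_point: "is_fixed_point \<sigma> l x" and admissible: "admissible \<sigma> x"
begin

abbreviation h :: nat where "h \<equiv> height l x"

lemma fixed_point_nth: "i < l \<Longrightarrow> x (int l * j + int i) = \<sigma> (x j) ! i"
  using fixed_point by (simp add: is_fixed_point_def)

lemma fixed_point_subst_iter: "w < l ^ K \<Longrightarrow> x (int l ^ K * j + int w) = subst_iter \<sigma> K (x j) ! w"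
proof (induction K arbitrary: w)
  case 0
  then show ?case by (simp add: subst_iter_def)
next
  case (Suc K)
  define w1 where "w1 = w div l"
  define w0 where "w0 = w mod l"
  have w: "w = w1 * l + w0" by (simp add: w1_def w0_def)
  have w0: "w0 < l" using l_ge_2 by (simp add: w0_def)
  have w1: "w1 < l ^ K" using Suc.prems l_ge_2 unfolding w1_def
    by (simp add: less_mult_imp_div_less mult.commute)
  have "int l ^ Suc K * j + int w = int l * (int l ^ K * j + int w1) + int w0"
    by (simp add: w algebra_simps)
  then have "x (int l ^ Suc K * j + int w) = \<sigma> (x (int l ^ K * j + int w1)) ! w0"
    using fixed_point_nth[OF w0] by simp
  also have "\<dots> = \<sigma> (subst_iter \<sigma> K (x j) ! w1) ! w0" using Suc.IH[OF w1] by simp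
  also have "\<dots> = concat (map \<sigma> (subst_iter \<sigma> K (x j))) ! (w1 * l + w0)"
    using nth_concat_map_const[of \<sigma> l w1 "subst_iter \<sigma> K (x j)" w0] constant_length w0 w1
      length_subst_iter[OF constant_length] by (simp add: constant_length_def)
  also have "\<dots> = subst_iter \<sigma> (Suc K) (x j) ! w" by (simp add: subst_iter_Suc w)
  finally show ?case .
qed

lemma fixed_point_block_cong:
  "x j = x j' \<Longrightarrow> w < l ^ K \<Longrightarrow> x (int l ^ K * j + int w) = x (int l ^ K * j' + int w)"
  by (simp add: fixed_point_subst_iter)

lemma letter_in_block:
  assumes "b \<in> set (subst_iter \<sigma> K (x j))"
  obtains w where "w < l ^ K" "x (int l ^ K * j + int w) = b"
proof -
  obtain w where w: "w < length (subst_iter \<sigma> K (x j))" "subst_iter \<sigma> K (x j) ! w = b"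
    using assms by (auto simp: in_set_conv_nth)
  have wK: "w < l ^ K" using w(1) by (simp add: length_subst_iter[OF constant_length])
  moreover have "x (int l ^ K * j + int w) = b" using fixed_point_subst_iter[OF wK] w(2) by simp
  ultimately show thesis by (rule that)
qed

lemma return_time_exists: "\<exists>n::nat. n \<ge> 1 \<and> x (int n) = x 0"
proof -
  obtain k where "\<forall>a b. b \<in> set (subst_iter \<sigma> k a)" using primitive primitive_def by blast
  then obtain w where "x (int l ^ k * 1 + int w) = x 0" using letter_in_block by blast
  moreover have "l ^ k \<ge> 1" using l_ge_2 by simp
  ultimately show ?thesis by (intro exI[of _ "l ^ k + w"]) auto
qed

lemma g0_pos: "g0 x > 0"
proof -
  obtain n :: nat where n: "n \<ge> 1" "x (int n) = x 0" using return_time_exists by blast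
  then have "g0 x dvd n" unfolding g0_def by (intro Gcd_dvd) auto
  then show ?thesis using n by (cases "g0 x = 0") auto
qed

lemma finite_height_candidates: "finite {n::nat. n \<ge> 1 \<and> coprime n l \<and> n dvd g0 x}"
proof (rule finite_subset)
  show "{n::nat. n \<ge> 1 \<and> coprime n l \<and> n dvd g0 x} \<subseteq> {..g0 x}"
    using g0_pos by (auto intro: dvd_imp_le)
qed simp

lemma height_spec: "h \<ge> 1" "coprime h l" "h dvd g0 x"
proof -
  have "1 \<in> {n::nat. n \<ge> 1 \<and> coprime n l \<and> n dvd g0 x}" by simp
  then have "h \<in> {n::nat. n \<ge> 1 \<and> coprime n l \<and> n dvd g0 x}"
    unfolding height_def using finite_height_candidates Max_in by blast
  then show "h \<ge> 1" "coprime h l" "h dvd g0 x" by auto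
qed

lemma dvd_height:
  assumes "d \<ge> 1" "coprime d l" "d dvd g0 x"
  shows "d dvd h"
proof -
  have "lcm d h \<ge> 1" using assms(1) height_spec(1) by (simp add: Suc_le_eq lcm_pos_nat)
  moreover have "coprime (lcm d h) l"
  proof -
    have "coprime (d * h) l" using assms(2) height_spec(2) by simp
    moreover have "lcm d h dvd d * h" by (simp add: lcm_least)
    ultimately show ?thesis using coprime_divisors[of "lcm d h" "d * h" l l] by simp
  qed
  moreover have "lcm d h dvd g0 x" using assms(3) height_spec(3) by (rule lcm_least)
  ultimately have "lcm d h \<le> h"
    unfolding height_def using finite_height_candidates by (intro Max_ge) auto
  moreover have "h \<le> lcm d h" using \<open>lcm d h \<ge> 1\<close> by (intro dvd_imp_le) auto
  ultimately have "lcm d h = h" by (rule antisym)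
  then show ?thesis using dvd_lcm1[of d h] by simp
qed

text \<open>Admissibility puts the window \<open>x\<^sub>J \<dots> x\<^sub>0\<close> inside some \<open>\<sigma>\<^sup>k(a)\<close>, and primitivity
  puts \<open>a\<close> at a non-negative position \<open>j\<close>; the block \<open>\<sigma>\<^sup>k(x\<^sub>j)\<close> of \<open>x\<close> repeats the window.\<close>

lemma exists_nonneg_same_letter: "\<exists>s\<ge>0. x s = x J \<and> int (g0 x) dvd (s - J)"
proof (cases "J \<ge> 0")
  case True
  then show ?thesis by (intro exI[of _ J]) auto
next
  case False
  define n where "n = nat (- J) + 1"
  obtain k a u v where uv: "subst_iter \<sigma> k a = u @ window x J n @ v"
    using admissible unfolding admissible_def subst_language_def by blast
  obtain k' where "\<forall>a b. b \<in> set (subst_iter \<sigma> k' a)" using primitive primitive_def by blast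
  then obtain w where "x (int l ^ k' * 0 + int w) = a" using letter_in_block by blast
  then have a: "x (int w) = a" by simp
  define s where "s = int l ^ k * int w + int (length u)"
  have s_window: "x (s + int i) = x (J + int i)" if "i < n" for i
  proof -
    have len: "length u + i < l ^ k"
      using length_subst_iter[OF constant_length, of k a] uv that by (simp add: window_def)
    have "x (s + int i) = subst_iter \<sigma> k a ! (length u + i)"
      using fixed_point_subst_iter[OF len, of "int w"] a by (simp add: s_def add.assoc)
    also have "\<dots> = x (J + int i)" using that uv by (simp add: nth_append window_def)
    finally show ?thesis .
  qed
  have "s \<ge> 0" by (simp add: s_def)
  have "x s = x J" using s_window[of 0] by (simp add: n_def)
  moreover have "x (s - J) = x 0" using s_window[of "nat (- J)"] False by (simp add: n_def)
  then have "g0 x dvd nat (s - J)"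
    unfolding g0_def using \<open>s \<ge> 0\<close> False by (intro Gcd_dvd) auto
  then have "int (g0 x) dvd int (nat (s - J))" by (simp only: int_dvd_int_iff)
  then have "int (g0 x) dvd s - J" using \<open>s \<ge> 0\<close> False by simp
  ultimately show ?thesis using \<open>s \<ge> 0\<close> by blast
qed

definition return_residues :: "nat \<Rightarrow> int set" where
  "return_residues q = {j. \<exists>t\<ge>0. x t = x 0 \<and> [t = j] (mod int q)}"

text \<open>With \<open>l^K \<equiv> 1 (mod q)\<close> and \<open>t\<^sub>2 < l^K\<close>, the position \<open>l^K t\<^sub>1 + t\<^sub>2\<close> is again a return
  time, because the level-\<open>K\<close> blocks at \<open>t\<^sub>1\<close> and at \<open>0\<close> coincide.\<close>

lemma return_residues_add:
  assumes "q \<ge> 1" "coprime q l" "a \<in> return_residues q" "b \<in> return_residues q"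
  shows "a + b \<in> return_residues q"
proof -
  obtain t1 where t1: "t1 \<ge> 0" "x t1 = x 0" "[t1 = a] (mod int q)"
    using assms(3) by (auto simp: return_residues_def)
  obtain t2 where t2: "t2 \<ge> 0" "x t2 = x 0" "[t2 = b] (mod int q)"
    using assms(4) by (auto simp: return_residues_def)
  obtain K where K: "[int l ^ K = 1] (mod int q)" "nat t2 < l ^ K"
    using ex_power_cong_one_gt l_ge_2 assms(1,2) by blast
  have "x (int l ^ K * t1 + t2) = x (int l ^ K * 0 + t2)"
    using fixed_point_block_cong[OF t1(2) K(2)] t2(1) by simp
  moreover have "[int l ^ K * t1 + t2 = 1 * a + b] (mod int q)"
    using K(1) t1(3) t2(3) by (intro cong_add cong_mult)
  moreover have "int l ^ K * t1 + t2 \<ge> 0" using t1(1) t2(1) by simp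
  ultimately show ?thesis using t2(2) unfolding return_residues_def by auto
qed

lemma multiple_of_height_in_return_residues:
  assumes "q \<ge> 1" "coprime q l" "int h dvd a"
  shows "a \<in> return_residues q"
proof -
  have "0 \<in> return_residues q" by (auto simp: return_residues_def)
  moreover have "b \<in> return_residues q"
    if "a \<in> return_residues q" "[a = b] (mod int q)" for a b
    using that cong_trans by (fastforce simp: return_residues_def)
  ultimately obtain d :: nat where d: "d \<ge> 1" "d dvd q" "return_residues q = {a. int d dvd a}"
    using add_closed_mod_closed_eq_multiples[OF assms(1)] return_residues_add[OF assms(1,2)]
    by metis
  have "d dvd g0 x" unfolding g0_def
  proof (rule Gcd_greatest)
    fix n assume "n \<in> {n::nat. n \<ge> 1 \<and> x (int n) = x 0}"
    then have "int n \<in> return_residues q"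
      unfolding return_residues_def by (intro CollectI exI[of _ "int n"]) simp
    then show "d dvd n" using d(3) by simp
  qed
  moreover have "coprime d l" using d(2) assms(2) coprime_divisors[of d q l l] by simp
  ultimately have "d dvd h" using d(1) by (intro dvd_height)
  then show ?thesis using d(3) assms(3) dvd_trans[of "int d" "int h" a] by simp
qed

lemma exists_congruent_same_letter:
  assumes "q \<ge> 1" "coprime q l" "int h dvd (J - J0)"
  shows "\<exists>J'. [J' = J0] (mod int q) \<and> x J' = x J"
proof -
  obtain s where s: "s \<ge> 0" "x s = x J" "int (g0 x) dvd (s - J)"
    using exists_nonneg_same_letter by blast
  have "int h dvd int (g0 x)" using height_spec(3) by simp
  then have "int h dvd s - J" using s(3) by (rule dvd_trans)
  then have "int h dvd (J - J0) + (s - J)" using assms(3) by (intro dvd_add)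
  then have "int h dvd - ((J - J0) + (s - J))" by (simp only: dvd_minus_iff)
  then have "int h dvd J0 - s" by simp
  then obtain t where t: "t \<ge> 0" "x t = x 0" "[t = J0 - s] (mod int q)"
    using multiple_of_height_in_return_residues[OF assms(1,2)] by (auto simp: return_residues_def)
  obtain K where K: "[int l ^ K = 1] (mod int q)" "nat s < l ^ K"
    using ex_power_cong_one_gt l_ge_2 assms(1,2) by blast
  have "x (int l ^ K * t + s) = x (int l ^ K * 0 + s)"
    using fixed_point_block_cong[OF t(2) K(2)] s(1) by simp
  moreover have "[int l ^ K * t + s = 1 * (J0 - s) + s] (mod int q)"
    using K(1) t(3) by (intro cong_add cong_mult) auto
  ultimately show ?thesis using s(2) by auto
qed

definition progression_letters :: "nat \<Rightarrow> int \<Rightarrow> 'a set" where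
  "progression_letters K r = {x (r + n * (int l ^ K * int h)) | n. True}"

lemma letter_in_progression_letters: "x r \<in> progression_letters K r"
  unfolding progression_letters_def by (intro CollectI exI[of _ 0]) simp

lemma progression_step_ge_1: "int l ^ K * int h \<ge> 1"
proof -
  have "int l ^ K \<ge> 1" "int h \<ge> 1" using l_ge_2 height_spec(1) by simp_all
  then show ?thesis using mult_mono[of 1 "int l ^ K" 1 "int h"] by simp
qed

lemma progression_letters_subset_residue_class:
  fixes p :: int
  assumes "p \<ge> 1"
  shows "\<exists>K. \<forall>K' \<ge> K. \<forall>r. progression_letters K' r \<subseteq> x ` {j. [j = r] (mod p)}"
proof -
  have "nat p \<ge> 1" using assms by simp
  then obtain q K where qK: "q \<ge> 1" "coprime q l" "nat p dvd l ^ K * q"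
    using ex_coprime_cofactor_dvd_power by blast
  have "progression_letters K' r \<subseteq> x ` {j. [j = r] (mod p)}" if "K \<le> K'" for K' r
  proof
    fix z
    assume "z \<in> progression_letters K' r"
    then obtain n where z: "z = x (r + n * (int l ^ K' * int h))"
      by (auto simp: progression_letters_def)
    define L where "L = int l ^ K'"
    define J0 where "J0 = r div L"
    define w where "w = r mod L"
    have "L > 0" using l_ge_2 by (simp add: L_def)
    then have w: "w \<ge> 0" "nat w < l ^ K'" by (simp_all add: w_def L_def nat_less_iff)
    have r: "r = L * J0 + w" by (simp add: J0_def w_def)
    obtain J' where J': "[J' = J0] (mod int q)" "x J' = x (J0 + n * int h)"
      using exists_congruent_same_letter[OF qK(1,2), of "J0 + n * int h" J0] by auto
    have "x (L * J' + w) = x (L * (J0 + n * int h) + w)"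
      using fixed_point_block_cong[OF J'(2) w(2)] w(1) by (simp add: L_def)
    also have "\<dots> = z" by (simp add: z r L_def algebra_simps)
    finally have "x (L * J' + w) = z" .
    moreover have "[L * J' + w = r] (mod p)"
    proof -
      have "int (nat p) dvd int (l ^ K * q)" using qK(3) by (simp only: int_dvd_int_iff)
      then have "p dvd int l ^ K * int q" using assms by simp
      moreover have "int l ^ K * int q dvd L * int q"
        using that by (simp add: L_def le_imp_power_dvd)
      moreover have "L * int q dvd L * J' - L * J0"
        using J'(1) by (simp add: cong_iff_dvd_diff flip: right_diff_distrib)
      ultimately have "p dvd L * J' - L * J0" by (meson dvd_trans)
      then show ?thesis by (simp add: cong_iff_dvd_diff r)
    qed
    ultimately show "z \<in> x ` {j. [j = r] (mod p)}" by blast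
  qed
  then show ?thesis by blast
qed

lemma graph_step_progression_letters:
  assumes "i < l"
  shows "graph_step \<sigma> i (progression_letters K r) = progression_letters (Suc K) (int l * r + int i)"
proof -
  have step: "\<sigma> (x (r + n * (int l ^ K * int h))) ! i
      = x (int l * r + int i + n * (int l ^ Suc K * int h))" for n
    using fixed_point_nth[OF assms, of "r + n * (int l ^ K * int h)"] by (simp add: algebra_simps)
  have "graph_step \<sigma> i (progression_letters K r) = {\<sigma> (x (r + n * (int l ^ K * int h))) ! i | n. True}"
    unfolding graph_step_def progression_letters_def by blast
  also have "\<dots> = progression_letters (Suc K) (int l * r + int i)"
    unfolding progression_letters_def by (simp only: step)
  finally show ?thesis .
qed

lemma progression_letters_shift:
  "progression_letters K (r + c * (int l ^ K * int h)) = progression_letters K r"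
proof -
  have "x (r + c * (int l ^ K * int h) + n * (int l ^ K * int h)) = x (r + (c + n) * (int l ^ K * int h))"
    for n by (simp add: algebra_simps)
  moreover have "x (r + n * (int l ^ K * int h))
      = x (r + c * (int l ^ K * int h) + (n - c) * (int l ^ K * int h))" for n
    by (simp add: algebra_simps)
  ultimately show ?thesis unfolding progression_letters_def by blast
qed

lemma progression_letters_0: "progression_letters 0 r = height_class h x (nat (r mod int h))"
proof -
  have "r = int (nat (r mod int h)) + (r div int h) * (int l ^ 0 * int h)"
    using height_spec(1) by simp
  then have "progression_letters 0 r = progression_letters 0 (int (nat (r mod int h)))"
    by (metis progression_letters_shift)
  then show ?thesis by (simp add: progression_letters_def height_class_def)
qed

lemma walk_end_progression_letters:
  "set is \<subseteq> {..<l} \<Longrightarrow>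
    \<exists>r'. walk_end \<sigma> (progression_letters K r) is = progression_letters (K + length is) r'"
proof (induction "is" arbitrary: K r)
  case Nil
  then show ?case by (auto simp: walk_end_def)
next
  case (Cons i "is")
  then have "walk_end \<sigma> (progression_letters K r) (i # is)
      = walk_end \<sigma> (progression_letters (Suc K) (int l * r + int i)) is"
    by (simp add: walk_end_def graph_step_progression_letters)
  then show ?case using Cons.IH[of "Suc K" "int l * r + int i"] Cons.prems by simp
qed

lemma progression_letters_eq_walk_end:
  "\<exists>a is. set is \<subseteq> {..<l} \<and> length is = K \<and>
    walk_end \<sigma> (progression_letters 0 a) is = progression_letters K r"
proof (induction K arbitrary: r)
  case 0
  show ?case by (intro exI[of _ r] exI[of _ "[]"]) (simp add: walk_end_def)
next
  case (Suc K)
  define i where "i = nat (r mod int l)"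
  have i: "i < l" "r = int l * (r div int l) + int i" using l_ge_2 by (simp_all add: i_def nat_less_iff)
  obtain a "is" where "is": "set is \<subseteq> {..<l}" "length is = K"
    "walk_end \<sigma> (progression_letters 0 a) is = progression_letters K (r div int l)"
    using Suc.IH by blast
  have "walk_end \<sigma> (progression_letters 0 a) (is @ [i]) = progression_letters (Suc K) r"
    using "is"(3) graph_step_progression_letters[OF i(1)] i(2) by (simp add: walk_end_def)
  then show ?case using "is" i(1) by (intro exI[of _ a] exI[of _ "is @ [i]"]) auto
qed

lemma walk_end_in_graph_vertices:
  "C \<in> graph_vertices \<sigma> l x \<Longrightarrow> set is \<subseteq> {..<l} \<Longrightarrow> walk_end \<sigma> C is \<in> graph_vertices \<sigma> l x"
  by (induction "is" arbitrary: C) (auto simp: walk_end_def intro: graph_vertices.step)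

lemma graph_vertices_eq: "graph_vertices \<sigma> l x = {progression_letters K r | K r. True}"
proof
  show "graph_vertices \<sigma> l x \<subseteq> {progression_letters K r | K r. True}"
  proof
    fix C
    assume "C \<in> graph_vertices \<sigma> l x"
    then show "C \<in> {progression_letters K r | K r. True}"
    proof (induction rule: graph_vertices.induct)
      case (base i)
      have "height_class h x i = progression_letters 0 (int i)"
        by (simp add: height_class_def progression_letters_def)
      then show ?case by blast
    next
      case (step C i)
      then show ?case using graph_step_progression_letters by blast
    qed
  qed
  show "{progression_letters K r | K r. True} \<subseteq> graph_vertices \<sigma> l x"
  proof clarify
    fix K r
    obtain a "is" where "is": "set is \<subseteq> {..<l}"
      "walk_end \<sigma> (progression_letters 0 a) is = progression_letters K r"
      using progression_letters_eq_walk_end by blast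
    have "nat (a mod int h) < h" using height_spec(1) by (simp add: nat_less_iff)
    then have "progression_letters 0 a \<in> graph_vertices \<sigma> l x"
      unfolding progression_letters_0 by (rule graph_vertices.base)
    then show "progression_letters K r \<in> graph_vertices \<sigma> l x"
      using walk_end_in_graph_vertices "is" by metis
  qed
qed

lemma image_progression_letters_singleton:
  fixes p :: int
  assumes "p \<ge> 1"
  obtains K where "\<And>K' r b. K \<le> K' \<Longrightarrow> (\<forall>n. \<phi> (x (r + n * p)) = b) \<Longrightarrow>
    \<phi> ` progression_letters K' r = {b}"
proof -
  obtain K where K: "\<And>K' r. K \<le> K' \<Longrightarrow> progression_letters K' r \<subseteq> x ` {j. [j = r] (mod p)}"
    using progression_letters_subset_residue_class[OF assms] by blast
  have "\<phi> ` progression_letters K' r = {b}"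
    if "K \<le> K'" "\<forall>n. \<phi> (x (r + n * p)) = b" for K' r b
  proof -
    have "\<phi> (x j) = b" if "[j = r] (mod p)" for j
    proof -
      obtain c where "j - r = p * c" using \<open>[j = r] (mod p)\<close> by (auto simp: cong_iff_dvd_diff elim: dvdE)
      then have "j = r + c * p" by (simp add: algebra_simps)
      then show ?thesis using \<open>\<forall>n. \<phi> (x (r + n * p)) = b\<close> by simp
    qed
    then have "\<phi> ` progression_letters K' r \<subseteq> {b}" using K[OF \<open>K \<le> K'\<close>] by blast
    then show ?thesis using letter_in_progression_letters by blast
  qed
  then show thesis by (rule that)
qed

lemma constant_subsequence_iff:
  "(\<exists>p::int\<ge>1. \<exists>k b. \<forall>n. \<phi> (x (k + n * p)) = b)
    \<longleftrightarrow> (\<exists>C\<in>graph_vertices \<sigma> l x. \<exists>b. \<phi> ` C = {b})"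
proof
  assume "\<exists>p::int\<ge>1. \<exists>k b. \<forall>n. \<phi> (x (k + n * p)) = b"
  then obtain p :: int and k b where "p \<ge> 1" "\<forall>n. \<phi> (x (k + n * p)) = b" by blast
  moreover obtain K where "\<And>K' r b. K \<le> K' \<Longrightarrow> (\<forall>n. \<phi> (x (r + n * p)) = b) \<Longrightarrow>
      \<phi> ` progression_letters K' r = {b}"
    using image_progression_letters_singleton[OF \<open>p \<ge> 1\<close>] by blast
  ultimately have "\<phi> ` progression_letters K k = {b}" by blast
  then show "\<exists>C\<in>graph_vertices \<sigma> l x. \<exists>b. \<phi> ` C = {b}" unfolding graph_vertices_eq by blast
next
  assume "\<exists>C\<in>graph_vertices \<sigma> l x. \<exists>b. \<phi> ` C = {b}"
  then obtain K r b where "\<phi> ` progression_letters K r = {b}" unfolding graph_vertices_eq by blast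
  then have "\<forall>n. \<phi> (x (r + n * (int l ^ K * int h))) = b"
    unfolding progression_letters_def by blast
  then show "\<exists>p::int\<ge>1. \<exists>k b. \<forall>n. \<phi> (x (k + n * p)) = b"
    using progression_step_ge_1 by blast
qed

lemma periodic_imp_walk_ends_singleton:
  assumes "periodic_seq (\<phi> \<circ> x)"
  obtains N where "\<And>C is. C \<in> graph_vertices \<sigma> l x \<Longrightarrow> set is \<subseteq> {..<l} \<Longrightarrow> length is \<ge> N
    \<Longrightarrow> \<exists>b. \<phi> ` walk_end \<sigma> C is = {b}"
proof -
  obtain p :: int where p: "p \<ge> 1" "\<And>n. (\<phi> \<circ> x) (n + p) = (\<phi> \<circ> x) n"
    using assms unfolding periodic_seq_def by blast
  obtain K where K: "\<And>K' r b. K \<le> K' \<Longrightarrow> (\<forall>n. \<phi> (x (r + n * p)) = b) \<Longrightarrow>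
      \<phi> ` progression_letters K' r = {b}"
    using image_progression_letters_singleton[OF p(1)] by blast
  have "\<exists>b. \<phi> ` walk_end \<sigma> C is = {b}"
    if C: "C \<in> graph_vertices \<sigma> l x" and "is": "set is \<subseteq> {..<l}" and len: "length is \<ge> K"
    for C "is"
  proof -
    obtain K0 r where "C = progression_letters K0 r" using C unfolding graph_vertices_eq by blast
    then obtain r' where "walk_end \<sigma> C is = progression_letters (K0 + length is) r'"
      using walk_end_progression_letters "is" by blast
    moreover have "\<forall>n. \<phi> (x (r' + n * p)) = \<phi> (x r')"
      using periodic_add_mult[of "\<phi> \<circ> x", OF p(2)] by simp
    ultimately show ?thesis using K len by auto
  qed
  then show thesis by (rule that)
qed

lemma walk_ends_singleton_imp_periodic:
  assumes "\<And>C is. C \<in> graph_vertices \<sigma> l x \<Longrightarrow> set is \<subseteq> {..<l} \<Longrightarrow> length is \<ge> N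
    \<Longrightarrow> \<exists>b. \<phi> ` walk_end \<sigma> C is = {b}"
  shows "periodic_seq (\<phi> \<circ> x)"
proof -
  have "\<phi> (x (m + int l ^ N * int h)) = \<phi> (x m)" for m
  proof -
    obtain a "is" where "set is \<subseteq> {..<l}" "length is = N"
      "walk_end \<sigma> (progression_letters 0 a) is = progression_letters N m"
      using progression_letters_eq_walk_end by blast
    then obtain b where b: "\<phi> ` progression_letters N m = {b}"
      using assms[of "progression_letters 0 a" "is"] unfolding graph_vertices_eq by auto
    have "x (m + int l ^ N * int h) \<in> progression_letters N m"
      unfolding progression_letters_def by (intro CollectI exI[of _ 1]) simp
    then have "\<phi> (x (m + int l ^ N * int h)) \<in> {b}" "\<phi> (x m) \<in> {b}"
      using b letter_in_progression_letters[of m N] by (simp_all only: image_eqI flip: b)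
    then show ?thesis by simp
  qed
  then show ?thesis unfolding periodic_seq_def using progression_step_ge_1 by auto
qed


lemma periodic_iff:
  "periodic_seq (\<phi> \<circ> x) \<longleftrightarrow>
    (\<exists>N. \<forall>C\<in>graph_vertices \<sigma> l x. \<forall>is. set is \<subseteq> {..<l} \<and> length is \<ge> N
      \<longrightarrow> (\<exists>b. \<phi> ` walk_end \<sigma> C is = {b}))"
proof
  assume "periodic_seq (\<phi> \<circ> x)"
  then show "\<exists>N. \<forall>C\<in>graph_vertices \<sigma> l x. \<forall>is. set is \<subseteq> {..<l} \<and> length is \<ge> N
      \<longrightarrow> (\<exists>b. \<phi> ` walk_end \<sigma> C is = {b})"
    by (rule periodic_imp_walk_ends_singleton) blast
next
  assume "\<exists>N. \<forall>C\<in>graph_vertices \<sigma> l x. \<forall>is. set is \<subseteq> {..<l} \<and> length is \<ge> N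
      \<longrightarrow> (\<exists>b. \<phi> ` walk_end \<sigma> C is = {b})"
  then obtain N where "\<forall>C\<in>graph_vertices \<sigma> l x. \<forall>is. set is \<subseteq> {..<l} \<and> length is \<ge> N
      \<longrightarrow> (\<exists>b. \<phi> ` walk_end \<sigma> C is = {b})" by blast
  then show "periodic_seq (\<phi> \<circ> x)" by (intro walk_ends_singleton_imp_periodic[of N]) blast
qed
end

theorem mainTheorem15:
  fixes \<sigma> :: "'a::finite \<Rightarrow> 'a list" and l :: nat and x :: "int \<Rightarrow> 'a"
    and \<phi> :: "'a \<Rightarrow> 'b" and y :: "int \<Rightarrow> 'b"
  assumes "primitive \<sigma>" and "constant_length \<sigma> l" and "l \<ge> 2"
    and "is_fixed_point \<sigma> l x" and "admissible \<sigma> x"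
    and "nonperiodic_subshift (subshift_gen x)"
    and "y = \<phi> \<circ> x"
  shows "((\<exists>p::int\<ge>1. \<exists>k::int. \<exists>b. \<forall>n::int. y (k + n * p) = b)
            \<longleftrightarrow> (\<exists>C\<in>graph_vertices \<sigma> l x. \<exists>b. \<phi> ` C = {b}))
      \<and> (periodic_seq y
            \<longleftrightarrow> (\<exists>N::nat. \<forall>C\<in>graph_vertices \<sigma> l x. \<forall>is. set is \<subseteq> {..<l} \<and> length is \<ge> N
                   \<longrightarrow> (\<exists>b. \<phi> ` walk_end \<sigma> C is = {b})))"
proof -
  interpret primitive_fixed_point \<sigma> l x
    using assms(1-5) by unfold_locales
  show ?thesis
    using constant_subsequence_iff[of \<phi>] periodic_iff[of \<phi>] assms(7) by simp
qed

end
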